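(* Let $q$ be a prime integer different from $p$ and $0\le\ell\le r$. The ideals of $\Omega_{H_\ell}$ over $(q)\subseteq R_0$ (i.e. ideals $[I_0,\dots,I_\ell]$ with $I_0=q\mathbb{Z}$) are exactly the $\ell+1$ ideals $$\mathcal S^\ell(q)\subsetneq\mathcal L\mathcal S^{\ell-1}(q)\subsetneq\cdots\subsetneq\mathcal L^{\ell-k}\mathcal S^k(q)\subsetneq\cdots\subsetneq\mathcal L^\ell(q),$$ and all of them are prime.
   Context: Fix a prime $p$ and an integer $r\ge0$. For $0\le k\le r$ let $R_k$ be the commutative ring which is free as a $\mathbb{Z}$-module with basis $X_{k,0},\dots,X_{k,k}$ and multiplication $X_{k,i}X_{k,j}=p^{k-\max(i,j)}X_{k,\min(i,j)}$; thus $X_{k,k}=1$, and an integer $n$ is identified with $nX_{k,k}$. For $0\le k\le\ell\le r$ define: the additive map $\mathrm{ind}^\ell_k:R_k\to R_\ell$, $X_{k,i}\mapsto X_{\ell,i}$; the ring homomorphism $\mathrm{res}^\ell_k:R_\ell\to R_k$, $\mathrm{res}^\ell_k(X_{\ell,i})=p^{\ell-k}X_{k,i}$ if $i\le k$ and $=p^{\ell-i}$ if $i\ge k$; and the multiplicative map $\mathrm{jnd}^\ell_k:R_k\to R_\ell$, $$\mathrm{jnd}^\ell_k\Big(\sum_{i=0}^k m_iX_{k,i}\Big)=m_kX_{\ell,\ell}+\sum_{k\le i<\ell}\frac{m_k^{p^{\ell-i}}-m_k^{p^{\ell-i-1}}}{p^{\ell-i}}X_{\ell,i}+\sum_{0\le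 i<k}\frac{(\sum_{s=i}^k m_sp^{k-s})^{p^{\ell-k}}-(\sum_{s=i+1}^k m_sp^{k-s})^{p^{\ell-k}}}{p^{\ell-i}}X_{\ell,i}$$ ($m_i\in\mathbb{Z}$). For $k=\ell$ these maps are the identity. These data form the Burnside Tambara functor on $\mathbb{Z}/p^r\mathbb{Z}$; keeping indices $\le n$ gives $\Omega_{H_n}$. An ideal of $\Omega_{H_n}$ is a sequence $[I_0,\dots,I_n]$ of ideals $I_k\subseteq R_k$ such that for every $1\le k\le n$: $\mathrm{ind}^k_{k-1}(I_{k-1})\subseteq I_k$, $\mathrm{res}^k_{k-1}(I_k)\subseteq I_{k-1}$, $\mathrm{jnd}^k_{k-1}(I_{k-1})\subseteq I_k$; inclusion is componentwise. It is proper if $I_0\ne R_0$. A proper ideal is prime if for all $0\le\ell'\le k\le n$, $a\in R_k$, $b\in R_{\ell'}$: whenever $(\mathrm{jnd}^m_i\mathrm{res}^k_i(a))\cdot(\mathrm{jnd}^m_j\mathrm{res}^{\ell'}_j(b))\in I_m$ for all $0\le i\le k$, $0\le j\le\ell'$, $m=\max(i,j)$, then $a\in I_k$ or $b\in I_{\ell'}$. Operators: for an ideal $I\subseteq R_{k-1}$, $L(I)=(\mathrm{res}^k_{k-1})^{-1}(I)\subseteq R_k$ and $S(I)$ is the ideal of $R_k$ generated by $\mathrm{ind}^k_{k-1}(I)\cup\mathrm{jnd}^k_{k-1}(I)$; for an ideal $\mathscr I=[I_0,\dots,I_{k-1}]$ of $\Omega_{H_{k-1}}$, $\mathcal{L}\mathscr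 I=[I_0,\dots,I_{k-1},L(I_{k-1})]$, $\mathcal{S}\mathscr I=[I_0,\dots,I_{k-1},S(I_{k-1})]$; $\mathcal L^n,\mathcal S^n$ are iterates, and $(q)$ denotes the ideal $[q\mathbb{Z}]$ of $\Omega_{H_0}$. *)

theory Defs
  imports "HOL-Computational_Algebra.Primes"
begin

text \<open>An element of R_k is represented by its coefficient function
  m :: nat => int, with m i the coefficient of X_{k,i}; coefficients of
  index > k vanish.\<close>

definition Rcar :: "nat \<Rightarrow> (nat \<Rightarrow> int) set" where
  "Rcar k = {m. \<forall>i>k. m i = 0}"

text \<open>Multiplication in R_k: X_{k,i} X_{k,j} = p^(k - max i j) X_{k, min i j}.\<close>
definition Rmult :: "nat \<Rightarrow> nat \<Rightarrow> (nat \<Rightarrow> int) \<Rightarrow> (nat \<Rightarrow> int) \<Rightarrow> (nat \<Rightarrow> int)" where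
  "Rmult p k a b = (\<lambda>s. if s \<le> k then
      (\<Sum>i\<le>k. \<Sum>j\<le>k. if min i j = s then a i * b j * int p ^ (k - max i j) else 0)
    else 0)"

text \<open>ind^l_k : X_{k,i} to X_{l,i}.\<close>
definition ind :: "nat \<Rightarrow> nat \<Rightarrow> (nat \<Rightarrow> int) \<Rightarrow> (nat \<Rightarrow> int)" where
  "ind l k a = a"

definition res :: "nat \<Rightarrow> nat \<Rightarrow> nat \<Rightarrow> (nat \<Rightarrow> int) \<Rightarrow> (nat \<Rightarrow> int)" where
  "res p l k a = (\<lambda>j. if j < k then int p ^ (l - k) * a j
      else if j = k then (\<Sum>i\<in>{k..l}. int p ^ (l - i) * a i)
      else 0)"

text \<open>jnd^l_k : R_k to R_l (the divisions are exact).\<close>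
definition jnd :: "nat \<Rightarrow> nat \<Rightarrow> nat \<Rightarrow> (nat \<Rightarrow> int) \<Rightarrow> (nat \<Rightarrow> int)" where
  "jnd p l k m = (\<lambda>i.
      if i = l then m k
      else if k \<le> i \<and> i < l then
        (m k ^ (p ^ (l - i)) - m k ^ (p ^ (l - i - 1))) div (int p ^ (l - i))
      else if i < k then
        ((\<Sum>s\<in>{i..k}. m s * int p ^ (k - s)) ^ (p ^ (l - k))
          - (\<Sum>s\<in>{i+1..k}. m s * int p ^ (k - s)) ^ (p ^ (l - k))) div (int p ^ (l - i))
      else 0)"

definition is_ideal :: "nat \<Rightarrow> nat \<Rightarrow> (nat \<Rightarrow> int) set \<Rightarrow> bool" where
  "is_ideal p k I \<longleftrightarrow> I \<subseteq> Rcar k \<and> (\<lambda>_. 0) \<in> I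
     \<and> (\<forall>x\<in>I. \<forall>y\<in>I. (\<lambda>i. x i + y i) \<in> I)
     \<and> (\<forall>x\<in>I. (\<lambda>i. - x i) \<in> I)
     \<and> (\<forall>a\<in>Rcar k. \<forall>x\<in>I. Rmult p k a x \<in> I)"

definition ideal_gen :: "nat \<Rightarrow> nat \<Rightarrow> (nat \<Rightarrow> int) set \<Rightarrow> (nat \<Rightarrow> int) set" where
  "ideal_gen p k A = \<Inter>{J. is_ideal p k J \<and> A \<subseteq> J}"

definition is_omega_ideal :: "nat \<Rightarrow> nat \<Rightarrow> (nat \<Rightarrow> int) set list \<Rightarrow> bool" where
  "is_omega_ideal p n I \<longleftrightarrow> length I = n + 1
     \<and> (\<forall>k\<le>n. is_ideal p k (I ! k))
     \<and> (\<forall>k. 1 \<le> k \<and> k \<le> n \<longrightarrow>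
          ind k (k - 1) ` (I ! (k - 1)) \<subseteq> I ! k
        \<and> res p k (k - 1) ` (I ! k) \<subseteq> I ! (k - 1)
        \<and> jnd p k (k - 1) ` (I ! (k - 1)) \<subseteq> I ! k)"

definition is_prime_omega_ideal :: "nat \<Rightarrow> nat \<Rightarrow> (nat \<Rightarrow> int) set list \<Rightarrow> bool" where
  "is_prime_omega_ideal p n I \<longleftrightarrow> is_omega_ideal p n I \<and> I ! 0 \<noteq> Rcar 0
     \<and> (\<forall>l' k a b. l' \<le> k \<and> k \<le> n \<and> a \<in> Rcar k \<and> b \<in> Rcar l' \<longrightarrow>
          (\<forall>i\<le>k. \<forall>j\<le>l'. Rmult p (max i j)
               (jnd p (max i j) i (res p k i a)) (jnd p (max i j) j (res p l' j b))
             \<in> I ! (max i j))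
          \<longrightarrow> a \<in> I ! k \<or> b \<in> I ! l')"

definition Lset :: "nat \<Rightarrow> nat \<Rightarrow> (nat \<Rightarrow> int) set \<Rightarrow> (nat \<Rightarrow> int) set" where
  "Lset p k I = {a \<in> Rcar k. res p k (k - 1) a \<in> I}"

definition Sset :: "nat \<Rightarrow> nat \<Rightarrow> (nat \<Rightarrow> int) set \<Rightarrow> (nat \<Rightarrow> int) set" where
  "Sset p k I = ideal_gen p k (ind k (k - 1) ` I \<union> jnd p k (k - 1) ` I)"

definition Lop :: "nat \<Rightarrow> (nat \<Rightarrow> int) set list \<Rightarrow> (nat \<Rightarrow> int) set list" where
  "Lop p I = I @ [Lset p (length I) (last I)]"

definition Sop :: "nat \<Rightarrow> (nat \<Rightarrow> int) set list \<Rightarrow> (nat \<Rightarrow> int) set list" where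
  "Sop p I = I @ [Sset p (length I) (last I)]"

definition qideal :: "nat \<Rightarrow> (nat \<Rightarrow> int) set list" where
  "qideal q = [{m \<in> Rcar 0. int q dvd m 0}]"

definition omega_le :: "(nat \<Rightarrow> int) set list \<Rightarrow> (nat \<Rightarrow> int) set list \<Rightarrow> bool" where
  "omega_le I J \<longleftrightarrow> length I = length J \<and> (\<forall>i<length I. I ! i \<subseteq> J ! i)"

definition omega_less :: "(nat \<Rightarrow> int) set list \<Rightarrow> (nat \<Rightarrow> int) set list \<Rightarrow> bool" where
  "omega_less I J \<longleftrightarrow> omega_le I J \<and> I \<noteq> J"

end

theory Submission
  imports Defs "HOL-Number_Theory.Number_Theory"
begin

text \<open>For \<open>t \<le> k\<close> let \<open>\<phi>\<^sub>t : R\<^sub>k \<rightarrow> \<int>\<close> be the ring homomorphism with \<open>\<phi>\<^sub>t(X\<^sub>k\<^sub>,\<^sub>i) = p\<^sup>k\<^sup>-\<^sup>i\<close>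
  for \<open>i \<ge> t\<close> and \<open>0\<close> for \<open>i < t\<close> (the mark at the subgroup of order \<open>p\<^sup>t\<close>). It turns \<open>ind\<close>
  into multiplication by \<open>p\<close>, \<open>res\<close> into the identity and \<open>jnd\<close> into the \<open>p\<close>-th power, the
  last because \<open>p\<^sup>e \<bar> x - y\<close> implies \<open>p\<^sup>e\<^sup>+\<^sup>1 \<bar> x\<^sup>p - y\<^sup>p\<close>. Hence, for each \<open>K\<close>, the elements
  \<open>a \<in> R\<^sub>k\<close> with \<open>q \<bar> \<phi>\<^sub>t(a)\<close> for all \<open>t \<le> min k K\<close> form the levels \<open>Z\<^sub>K(k)\<close> of an ideal
  over \<open>(q)\<close>; it is prime because the top coefficient of a product of \<open>jnd\<close>'s of restrictions
  is a product of values of the \<open>\<phi>\<^sub>t\<close>, and computing \<open>\<L>\<close> and \<open>\<S>\<close> shows that it equals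
  \<open>\<L>\<^sup>l\<^sup>-\<^sup>K \<S>\<^sup>K (q)\<close>.

  Conversely, suppose an ideal over \<open>(q)\<close> has level \<open>Z\<^sub>K(k)\<close> and let \<open>J\<close> be its level \<open>k+1\<close>.
  Restriction forces \<open>J \<subseteq> Z\<^sub>K(k+1)\<close>. As \<open>p\<close> is a unit modulo \<open>q\<close>, the element
  \<open>q - jnd(q)\<close> is induced from \<open>Z\<^sub>k(k) \<subseteq> Z\<^sub>K(k)\<close>, so \<open>q \<in> J\<close>, and then \<open>J\<close> contains every element of
  \<open>Z\<^sub>K(k+1)\<close> whose top coefficient is divisible by \<open>q\<close>, in particular \<open>Z\<^sub>k\<^sub>+\<^sub>1(k+1)\<close>. By
  Bezout, \<open>J = Z\<^sub>K(k+1)\<close> as soon as \<open>J\<close> contains one element of \<open>Z\<^sub>K(k+1)\<close> with top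
  coefficient prime to \<open>q\<close>. For \<open>K < k\<close> the element \<open>jnd(p X\<^sub>k\<^sub>,\<^sub>k - X\<^sub>k\<^sub>,\<^sub>k\<^sub>-\<^sub>1)\<close>, with top
  coefficient \<open>p\<close>, is one; for \<open>K = k\<close> either \<open>J = Z\<^sub>k\<^sub>+\<^sub>1(k+1)\<close> or \<open>J\<close> contains one.\<close>

section \<open>Congruences modulo powers of \<open>p\<close>\<close>

lemma prime_dvd_power_self_diff:
  fixes m :: int
  assumes "prime p"
  shows "int p dvd m ^ p - m"
proof -
  define a where "a = nat (m mod int p)"
  have p_pos: "p > 0" using assms prime_gt_0_nat by blast
  have ma: "[m = int a] (mod int p)" unfolding a_def using p_pos by (simp add: cong_def)
  have "[a ^ p = a] (mod p)"
  proof (cases "p dvd a")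
    case True
    then have "[a ^ p = 0] (mod p)" using p_pos by (simp add: cong_0_iff) (meson dvd_power dvd_trans)
    with True show ?thesis by (metis cong_0_iff cong_sym cong_trans)
  next
    case False
    have "[a ^ (p - 1) * a = 1 * a] (mod p)"
      using fermat_theorem[OF assms False] by (rule cong_mult) simp
    moreover have "a ^ (p - 1) * a = a ^ p" using p_pos by (metis Suc_diff_1 power_Suc2)
    ultimately show ?thesis by simp
  qed
  then have "[int a ^ p = int a] (mod int p)" by (metis cong_int_iff of_nat_power)
  moreover have "[m ^ p = int a ^ p] (mod int p)" using ma by (rule cong_pow)
  ultimately have "[m ^ p = m] (mod int p)" using ma by (metis cong_sym cong_trans)
  then show ?thesis by (simp add: cong_iff_dvd_diff)
qed

lemma prime_power_dvd_power_diff: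
  fixes x y :: int
  assumes "prime p" "e \<ge> 1" "int p ^ e dvd x - y"
  shows "int p ^ Suc e dvd x ^ p - y ^ p"
proof -
  have "int p dvd int p ^ e" using assms(2) by (simp add: dvd_power)
  then have "int p dvd x - y" using assms(3) dvd_trans by blast
  then have xy: "[x = y] (mod int p)" by (simp add: cong_iff_dvd_diff)
  have "[(\<Sum>i<p. y ^ (p - Suc i) * x ^ i) = (\<Sum>i<p. y ^ (p - 1))] (mod int p)"
  proof (rule cong_sum)
    fix i assume "i \<in> {..<p}"
    then have "p - Suc i + i = p - 1" by simp
    then have "y ^ (p - Suc i) * y ^ i = y ^ (p - 1)" by (metis power_add)
    moreover have "[y ^ (p - Suc i) * x ^ i = y ^ (p - Suc i) * y ^ i] (mod int p)"
      by (rule cong_mult) (auto intro: cong_pow xy)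
    ultimately show "[y ^ (p - Suc i) * x ^ i = y ^ (p - 1)] (mod int p)" by simp
  qed
  then have "int p dvd (\<Sum>i<p. y ^ (p - Suc i) * x ^ i)"
    using cong_dvd_iff by fastforce
  then have "int p ^ e * int p dvd (x - y) * (\<Sum>i<p. y ^ (p - Suc i) * x ^ i)"
    using assms(3) by (simp add: mult_dvd_mono)
  then show ?thesis by (metis power_diff_sumr2 power_Suc2)
qed

lemma distinct_primes_not_dvd:
  assumes "prime p" "prime q" "q \<noteq> p"
  shows "\<not> int q dvd int p"
  using assms primes_dvd_imp_eq by auto

lemma distinct_prime_dvd_mult_cancel:
  assumes "prime p" "prime q" "q \<noteq> p" "int q dvd int p * g"
  shows "int q dvd g"
proof -
  have "prime (int q)" using assms(2) by simp
  then show ?thesis using assms(4) distinct_primes_not_dvd[OF assms(1-3)] by (simp add: prime_dvd_mult_iff)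
qed

section \<open>Ghost components\<close>

text \<open>\<open>ghost p k t\<close> is the homomorphism \<open>\<phi>\<^sub>t : R\<^sub>k \<rightarrow> \<int>\<close>; it is only meaningful for \<open>t \<le> k\<close>.\<close>

definition ghost :: "nat \<Rightarrow> nat \<Rightarrow> nat \<Rightarrow> (nat \<Rightarrow> int) \<Rightarrow> int" where
  "ghost p k t a = (\<Sum>i\<in>{t..k}. a i * int p ^ (k - i))"

lemma ghost_Suc: "t \<le> k \<Longrightarrow> ghost p k t a = a t * int p ^ (k - t) + ghost p k (Suc t) a"
  unfolding ghost_def by (simp add: sum.atLeast_Suc_atMost)

lemma ghost_top [simp]: "ghost p k k a = a k"
  unfolding ghost_def by simp

lemma ghost_add: "ghost p k t (\<lambda>i. x i + y i) = ghost p k t x + ghost p k t y"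
  unfolding ghost_def by (simp add: sum.distrib algebra_simps)

lemma ghost_diff: "ghost p k t (\<lambda>i. x i - y i) = ghost p k t x - ghost p k t y"
  unfolding ghost_def by (simp add: sum_subtractf algebra_simps)

lemma ghost_uminus: "ghost p k t (\<lambda>i. - x i) = - ghost p k t x"
  unfolding ghost_def by (simp add: sum_negf)

lemma ghost_cmult: "ghost p k t (\<lambda>i. c * x i) = c * ghost p k t x"
  unfolding ghost_def by (simp add: sum_distrib_left algebra_simps)

lemma ghost_basis:
  assumes "t \<le> j" "j \<le> k"
  shows "ghost p k t (\<lambda>i. if i = j then c else 0) = c * int p ^ (k - j)"
proof -
  have "ghost p k t (\<lambda>i. if i = j then c else 0) = (\<Sum>i\<in>{t..k}. if i = j then c * int p ^ (k - j) else 0)"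
    unfolding ghost_def by (rule sum.cong) auto
  then show ?thesis using assms by (simp add: sum.delta)
qed

lemma sum_atMost_if_atLeast:
  fixes k t :: nat
  shows "(\<Sum>i\<le>k. if t \<le> i then f i else 0) = (\<Sum>i\<in>{t..k}. f i)"
proof -
  have "{i \<in> {..k}. t \<le> i} = {t..k}" by auto
  moreover have "sum f {i \<in> {..k}. t \<le> i} = (\<Sum>i\<le>k. if t \<le> i then f i else 0)"
    by (rule sum.inter_filter[OF finite_atMost])
  ultimately show ?thesis by simp
qed

lemma ghost_Rmult:
  assumes "t \<le> k"
  shows "ghost p k t (Rmult p k a b) = ghost p k t a * ghost p k t b"
proof -
  define F where "F i j = a i * b j * int p ^ (k - max i j) * int p ^ (k - min i j)" for i j
  have "ghost p k t (Rmult p k a b) = (\<Sum>s\<in>{t..k}. \<Sum>i\<le>k. \<Sum>j\<le>k. if min i j = s then F i j else 0)"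
    unfolding ghost_def Rmult_def
    by (rule sum.cong) (auto simp: sum_distrib_right F_def intro!: sum.cong)
  also have "\<dots> = (\<Sum>i\<le>k. \<Sum>j\<le>k. \<Sum>s\<in>{t..k}. if min i j = s then F i j else 0)"
    by (subst sum.swap) (rule sum.cong[OF refl], rule sum.swap)
  also have "\<dots> = (\<Sum>i\<le>k. \<Sum>j\<le>k. if t \<le> i then (if t \<le> j then F i j else 0) else 0)"
    by (intro sum.cong refl) (auto simp: sum.delta)
  also have "\<dots> = (\<Sum>i\<le>k. if t \<le> i then (\<Sum>j\<in>{t..k}. F i j) else 0)"
    by (intro sum.cong refl) (auto simp: sum_atMost_if_atLeast)
  also have "\<dots> = (\<Sum>i\<in>{t..k}. \<Sum>j\<in>{t..k}. F i j)"
    by (rule sum_atMost_if_atLeast)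
  also have "\<dots> = ghost p k t a * ghost p k t b"
    unfolding ghost_def sum_product
  proof (intro sum.cong refl)
    fix i j
    have "int p ^ (k - max i j) * int p ^ (k - min i j) = int p ^ (k - i) * int p ^ (k - j)"
      by (cases "i \<le> j") (auto simp: max_def min_def mult.commute)
    then show "F i j = a i * int p ^ (k - i) * (b j * int p ^ (k - j))"
      unfolding F_def by (metis (no_types, lifting) mult.assoc mult.left_commute)
  qed
  finally show ?thesis .
qed

lemma ghost_ind:
  assumes "x \<in> Rcar n" "t \<le> n"
  shows "ghost p (Suc n) t (ind (Suc n) n x) = int p * ghost p n t x"
  using assms(2)
proof (induction t rule: inc_induct)
  case base
  have "x (Suc n) = 0" using assms(1) by (simp add: Rcar_def)
  then show ?case by (simp add: ghost_Suc ind_def)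
next
  case (step t)
  then show ?case by (simp add: ghost_Suc ind_def Suc_diff_le algebra_simps)
qed

lemma ghost_res:
  assumes "t \<le> n"
  shows "ghost p n t (res p (Suc n) n a) = ghost p (Suc n) t a"
  using assms
proof (induction t rule: inc_induct)
  case base
  show ?case by (simp add: ghost_Suc res_def sum.atLeast_Suc_atMost)
next
  case (step t)
  then show ?case by (simp add: ghost_Suc res_def Suc_diff_le algebra_simps)
qed

lemma res_Rcar: "res p (Suc n) n a \<in> Rcar n"
  by (simp add: res_def Rcar_def)

lemma res_top: "res p k t a t = ghost p k t a"
  by (simp add: res_def ghost_def mult.commute)

lemma jnd_top [simp]: "jnd p l k m l = m k"
  by (simp add: jnd_def)

lemma jnd_Rcar: "k \<le> l \<Longrightarrow> jnd p l k m \<in> Rcar l"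
  by (simp add: jnd_def Rcar_def)

lemma jnd_below:
  "i < n \<Longrightarrow> jnd p (Suc n) n m i = (ghost p n i m ^ p - ghost p n (Suc i) m ^ p) div int p ^ (Suc n - i)"
  by (simp add: jnd_def ghost_def)

lemma ghost_jnd:
  assumes "prime p" "t \<le> n"
  shows "ghost p (Suc n) t (jnd p (Suc n) n m) = ghost p n t m ^ p"
  using assms(2)
proof (induction t rule: inc_induct)
  case base
  have "int p dvd m n ^ p - m n" by (rule prime_dvd_power_self_diff[OF assms(1)])
  then show ?case by (simp add: ghost_Suc jnd_def)
next
  case (step t)
  let ?A = "ghost p n t m" and ?B = "ghost p n (Suc t) m"
  have "?A - ?B = m t * int p ^ (n - t)" using step(2) by (simp add: ghost_Suc)
  then have "int p ^ Suc (n - t) dvd ?A ^ p - ?B ^ p"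
    using prime_power_dvd_power_diff[OF assms(1)] step(2) by simp
  then have "int p ^ (Suc n - t) dvd ?A ^ p - ?B ^ p" using step(2) by (simp add: Suc_diff_le)
  then show ?case
    using step by (simp add: ghost_Suc jnd_below)
qed

lemma Rmult_Rcar: "Rmult p k a b \<in> Rcar k"
  by (simp add: Rmult_def Rcar_def)

lemma Rmult_top: "Rmult p m u v m = u m * v m"
proof -
  have "Rmult p m u v m = (\<Sum>i\<le>m. \<Sum>j\<le>m. if min i j = m then u i * v j * int p ^ (m - max i j) else 0)"
    by (simp add: Rmult_def)
  also have "\<dots> = (\<Sum>i\<le>m. \<Sum>j\<le>m. if i = m then (if j = m then u m * v m else 0) else 0)"
    by (intro sum.cong refl) (auto simp: min_def max_def)
  also have "\<dots> = (\<Sum>i\<le>m. if i = m then u m * v m else 0)"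
    by (intro sum.cong refl) (simp add: sum.delta')
  finally show ?thesis by (simp add: sum.delta')
qed

lemma Rmult_const:
  assumes "a \<in> Rcar k"
  shows "Rmult p k (\<lambda>i. if i = k then c else 0) a = (\<lambda>i. c * a i)"
proof
  fix s
  show "Rmult p k (\<lambda>i. if i = k then c else 0) a s = c * a s"
  proof (cases "s \<le> k")
    case True
    have "Rmult p k (\<lambda>i. if i = k then c else 0) a s
        = (\<Sum>i\<le>k. if i = k then (\<Sum>j\<le>k. if min k j = s then c * a j * int p ^ (k - max k j) else 0) else 0)"
      using True unfolding Rmult_def by (simp only: if_True) (intro sum.cong refl, auto intro!: sum.neutral)
    also have "\<dots> = (\<Sum>j\<le>k. if min k j = s then c * a j * int p ^ (k - max k j) else 0)"
      by (simp add: sum.delta')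
    also have "\<dots> = (\<Sum>j\<le>k. if j = s then c * a s else 0)"
      by (intro sum.cong refl) (auto simp: min_def max_def)
    finally show ?thesis using True by (simp add: sum.delta')
  next
    case False
    then show ?thesis using assms by (simp add: Rmult_def Rcar_def)
  qed
qed

lemma is_ideal_add: "is_ideal p k J \<Longrightarrow> x \<in> J \<Longrightarrow> y \<in> J \<Longrightarrow> (\<lambda>i. x i + y i) \<in> J"
  by (simp add: is_ideal_def)

lemma is_ideal_Rcar: "is_ideal p k J \<Longrightarrow> x \<in> J \<Longrightarrow> x \<in> Rcar k"
  by (auto simp: is_ideal_def)

lemma is_ideal_cmult:
  assumes J: "is_ideal p k J" and x: "x \<in> J"
  shows "(\<lambda>i. c * x i) \<in> J"
proof -
  have "(\<lambda>i. if i = k then c else 0) \<in> Rcar k" by (simp add: Rcar_def)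
  then have "Rmult p k (\<lambda>i. if i = k then c else 0) x \<in> J" using J x by (simp add: is_ideal_def)
  then show ?thesis using Rmult_const[OF is_ideal_Rcar[OF J x]] by simp
qed

section \<open>The ghost ideals\<close>

text \<open>\<open>ghost_ideal p q K k\<close> is \<open>Z\<^sub>K(k)\<close>, and \<open>ghost_chain p q K l\<close> is the ideal
  \<open>[Z\<^sub>K(0), \<dots>, Z\<^sub>K(l)]\<close> of \<open>\<Omega>\<^bsub>H\<^sub>l\<^esub>\<close>.\<close>

definition ghost_ideal :: "nat \<Rightarrow> nat \<Rightarrow> nat \<Rightarrow> nat \<Rightarrow> (nat \<Rightarrow> int) set" where
  "ghost_ideal p q K k = {a \<in> Rcar k. \<forall>t \<le> min k K. int q dvd ghost p k t a}"

lemma ghost_ideal_antimono: "K \<le> K' \<Longrightarrow> ghost_ideal p q K' k \<subseteq> ghost_ideal p q K k"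
  unfolding ghost_ideal_def by auto

lemma ghost_ideal_saturate: "k \<le> K \<Longrightarrow> ghost_ideal p q K k = ghost_ideal p q k k"
  unfolding ghost_ideal_def by (simp add: min_def)

lemma ghost_ideal_0: "ghost_ideal p q K 0 = {m \<in> Rcar 0. int q dvd m 0}"
  unfolding ghost_ideal_def by auto

lemma ghost_ideal_top_iff:
  "a \<in> ghost_ideal p q (Suc n) (Suc n) \<longleftrightarrow> a \<in> ghost_ideal p q n (Suc n) \<and> int q dvd a (Suc n)"
  unfolding ghost_ideal_def by (auto simp: le_Suc_eq)

definition ghost_chain :: "nat \<Rightarrow> nat \<Rightarrow> nat \<Rightarrow> nat \<Rightarrow> (nat \<Rightarrow> int) set list" where
  "ghost_chain p q K l = map (ghost_ideal p q K) [0..<Suc l]"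

lemma length_ghost_chain [simp]: "length (ghost_chain p q K l) = Suc l"
  by (simp add: ghost_chain_def)

lemma nth_ghost_chain [simp]: "j \<le> l \<Longrightarrow> ghost_chain p q K l ! j = ghost_ideal p q K j"
  by (simp add: ghost_chain_def del: upt_Suc)

lemma last_ghost_chain [simp]: "last (ghost_chain p q K l) = ghost_ideal p q K l"
  by (simp add: ghost_chain_def last_map del: upt_Suc)

lemma ghost_chain_Suc: "ghost_chain p q K (Suc l) = ghost_chain p q K l @ [ghost_ideal p q K (Suc l)]"
  by (simp add: ghost_chain_def)

lemma ghost_chain_saturate:
  assumes "l \<le> K"
  shows "ghost_chain p q K l = ghost_chain p q l l"
proof (rule nth_equalityI)
  fix j assume "j < length (ghost_chain p q K l)"
  with assms show "ghost_chain p q K l ! j = ghost_chain p q l l ! j"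
    using ghost_ideal_saturate[of j K] ghost_ideal_saturate[of j l] by simp
qed simp

lemma is_ideal_ghost_ideal: "is_ideal p k (ghost_ideal p q K k)"
  unfolding is_ideal_def
proof (intro conjI ballI)
  show "ghost_ideal p q K k \<subseteq> Rcar k" "(\<lambda>_. 0) \<in> ghost_ideal p q K k"
    unfolding ghost_ideal_def Rcar_def ghost_def by auto
  fix x assume x: "x \<in> ghost_ideal p q K k"
  then show "(\<lambda>i. - x i) \<in> ghost_ideal p q K k"
    unfolding ghost_ideal_def Rcar_def by (simp add: ghost_uminus)
  show "(\<lambda>i. x i + y i) \<in> ghost_ideal p q K k" if "y \<in> ghost_ideal p q K k" for y
    using x that unfolding ghost_ideal_def Rcar_def by (simp add: ghost_add)
  show "Rmult p k a x \<in> ghost_ideal p q K k" if "a \<in> Rcar k" for a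
    using x unfolding ghost_ideal_def by (simp add: Rmult_Rcar ghost_Rmult)
qed

lemma Lset_ghost_ideal: "K \<le> n \<Longrightarrow> Lset p (Suc n) (ghost_ideal p q K n) = ghost_ideal p q K (Suc n)"
  unfolding Lset_def ghost_ideal_def using res_Rcar by (auto simp: ghost_res min_def)

lemma res_ghost_ideal: "res p (Suc n) n ` ghost_ideal p q K (Suc n) \<subseteq> ghost_ideal p q K n"
  unfolding ghost_ideal_def using res_Rcar by (auto simp: ghost_res)

lemma ind_ghost_ideal: "ind (Suc n) n ` ghost_ideal p q K n \<subseteq> ghost_ideal p q K (Suc n)"
proof
  fix y assume "y \<in> ind (Suc n) n ` ghost_ideal p q K n"
  then obtain x where x: "x \<in> ghost_ideal p q K n" and y: "y = ind (Suc n) n x" by auto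
  have xr: "x \<in> Rcar n" using x by (simp add: ghost_ideal_def)
  have "int q dvd ghost p (Suc n) t y" if t: "t \<le> min (Suc n) K" for t
  proof (cases "t = Suc n")
    case True
    then show ?thesis using xr y by (simp add: Rcar_def ind_def)
  next
    case False
    then have "t \<le> min n K" using t by simp
    then show ?thesis using x xr y by (simp add: ghost_ideal_def ghost_ind)
  qed
  then show "y \<in> ghost_ideal p q K (Suc n)" using xr y by (simp add: ghost_ideal_def Rcar_def ind_def)
qed

lemma jnd_ghost_ideal:
  assumes "prime p"
  shows "jnd p (Suc n) n ` ghost_ideal p q K n \<subseteq> ghost_ideal p q K (Suc n)"
proof
  fix y assume "y \<in> jnd p (Suc n) n ` ghost_ideal p q K n"
  then obtain x where x: "x \<in> ghost_ideal p q K n" and y: "y = jnd p (Suc n) n x" by auto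
  have "int q dvd ghost p (Suc n) t y" if t: "t \<le> min (Suc n) K" for t
  proof (cases "t = Suc n")
    case True
    then have "n \<le> min n K" using t by simp
    then have "int q dvd ghost p n n x" using x unfolding ghost_ideal_def by blast
    then show ?thesis using True y by simp
  next
    case False
    then have t': "t \<le> min n K" using t by simp
    then have "int q dvd ghost p n t x" using x by (simp add: ghost_ideal_def)
    then have "int q dvd ghost p n t x ^ p" using prime_gt_0_nat[OF assms] by (meson dvd_power dvd_trans)
    then show ?thesis using t' y ghost_jnd[OF assms] by simp
  qed
  then show "y \<in> ghost_ideal p q K (Suc n)" using y by (simp add: ghost_ideal_def jnd_Rcar)
qed

lemma is_omega_ideal_ghost_chain:
  assumes "prime p"
  shows "is_omega_ideal p l (ghost_chain p q K l)"
  unfolding is_omega_ideal_def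
proof (intro conjI allI impI)
  fix k assume "1 \<le> k \<and> k \<le> l"
  then obtain n where n: "k = Suc n" "Suc n \<le> l" by (cases k) auto
  then show "ind k (k - 1) ` (ghost_chain p q K l ! (k - 1)) \<subseteq> ghost_chain p q K l ! k"
    and "res p k (k - 1) ` (ghost_chain p q K l ! k) \<subseteq> ghost_chain p q K l ! (k - 1)"
    and "jnd p k (k - 1) ` (ghost_chain p q K l ! (k - 1)) \<subseteq> ghost_chain p q K l ! k"
    using ind_ghost_ideal res_ghost_ideal jnd_ghost_ideal[OF assms] by auto
qed (simp_all add: is_ideal_ghost_ideal)

lemma is_prime_omega_ideal_ghost_chain:
  assumes pr: "prime p" "prime q"
  shows "is_prime_omega_ideal p l (ghost_chain p q K l)"
  unfolding is_prime_omega_ideal_def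
proof (intro conjI allI impI)
  show "is_omega_ideal p l (ghost_chain p q K l)" by (rule is_omega_ideal_ghost_chain[OF pr(1)])
  have "(\<lambda>i. if i = 0 then 1 else 0) \<in> Rcar 0 - ghost_ideal p q K 0"
    using prime_gt_1_nat[OF pr(2)] by (simp add: Rcar_def ghost_ideal_0)
  then show "ghost_chain p q K l ! 0 \<noteq> Rcar 0" by auto
  fix l' k a b
  assume A: "l' \<le> k \<and> k \<le> l \<and> a \<in> Rcar k \<and> b \<in> Rcar l'"
  assume H: "\<forall>i\<le>k. \<forall>j\<le>l'. Rmult p (max i j) (jnd p (max i j) i (res p k i a))
                                 (jnd p (max i j) j (res p l' j b)) \<in> ghost_chain p q K l ! max i j"
  show "a \<in> ghost_chain p q K l ! k \<or> b \<in> ghost_chain p q K l ! l'"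
  proof (rule ccontr)
    assume "\<not> ?thesis"
    then have "a \<notin> ghost_ideal p q K k" "b \<notin> ghost_ideal p q K l'" using A by auto
    then obtain i j where i: "i \<le> min k K" "\<not> int q dvd ghost p k i a"
      and j: "j \<le> min l' K" "\<not> int q dvd ghost p l' j b"
      using A by (auto simp: ghost_ideal_def)
    have "max i j \<le> min l K" using i j A by auto
    moreover have "Rmult p (max i j) (jnd p (max i j) i (res p k i a)) (jnd p (max i j) j (res p l' j b))
        \<in> ghost_ideal p q K (max i j)"
      using H i j A by auto
    ultimately have "int q dvd ghost p (max i j) (max i j)
        (Rmult p (max i j) (jnd p (max i j) i (res p k i a)) (jnd p (max i j) j (res p l' j b)))"
      unfolding ghost_ideal_def by auto
    then have "int q dvd ghost p k i a * ghost p l' j b"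
      by (simp add: Rmult_top res_top)
    then show False using i j pr(2) by (simp add: prime_dvd_mult_iff)
  qed
qed

lemma ghost_ideal_top_witness:
  "(\<lambda>i. if i = Suc k then int p else if i = k then -1 else 0) \<in> ghost_ideal p q k (Suc k)"
proof -
  have "(\<lambda>i. if i = Suc k then int p else if i = k then -1 else 0)
      = (\<lambda>i. (if i = Suc k then int p else 0) - (if i = k then 1 else 0))" by auto
  then show ?thesis by (simp add: ghost_ideal_def Rcar_def ghost_diff ghost_basis)
qed

lemma ghost_ideal_Suc_psubset:
  assumes "prime p" "prime q" "q \<noteq> p"
  shows "ghost_ideal p q (Suc k) (Suc k) \<subset> ghost_ideal p q k (Suc k)"
proof -
  have "(\<lambda>i. if i = Suc k then int p else if i = k then -1 else 0) \<notin> ghost_ideal p q (Suc k) (Suc k)"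
    using distinct_primes_not_dvd[OF assms] ghost_ideal_top_iff by auto
  moreover have "ghost_ideal p q (Suc k) (Suc k) \<subseteq> ghost_ideal p q k (Suc k)"
    by (rule ghost_ideal_antimono) simp
  ultimately show ?thesis using ghost_ideal_top_witness[of k p q] by blast
qed

lemma omega_less_ghost_chain_Suc:
  assumes "prime p" "prime q" "q \<noteq> p" "k < l"
  shows "omega_less (ghost_chain p q (Suc k) l) (ghost_chain p q k l)"
proof -
  have "ghost_chain p q (Suc k) l ! Suc k \<noteq> ghost_chain p q k l ! Suc k"
    using ghost_ideal_Suc_psubset[OF assms(1-3)] assms(4) by auto
  then show ?thesis
    unfolding omega_less_def omega_le_def using ghost_ideal_antimono[of k "Suc k"] by auto
qed

section \<open>Ideals over \<open>(q)\<close> are ghost chains\<close>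

lemma ghost_ideal_top_dvd_mem:
  assumes pr: "prime p" "prime q" "q \<noteq> p" and J: "is_ideal p (Suc n) J"
    and ind: "ind (Suc n) n ` ghost_ideal p q K n \<subseteq> J"
    and qJ: "(\<lambda>i. if i = Suc n then int q else 0) \<in> J"
    and b: "b \<in> ghost_ideal p q K (Suc n)" and bq: "int q dvd b (Suc n)"
  shows "b \<in> J"
proof -
  obtain e where e: "b (Suc n) = int q * e" using bq by blast
  define x where "x = (\<lambda>i. b i - (if i = Suc n then b (Suc n) else 0))"
  have br: "b \<in> Rcar (Suc n)" using b by (simp add: ghost_ideal_def)
  have xr: "x \<in> Rcar n" using br unfolding x_def Rcar_def by auto
  have "int q dvd ghost p n t x" if t: "t \<le> min n K" for t
  proof -
    have "ghost p (Suc n) t x = ghost p (Suc n) t b - b (Suc n)"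
      unfolding x_def ghost_diff using t by (simp add: ghost_basis)
    moreover have "int q dvd ghost p (Suc n) t b" using b t by (simp add: ghost_ideal_def)
    ultimately have "int q dvd int p * ghost p n t x"
      using bq t ghost_ind[OF xr] by (simp add: ind_def)
    then show ?thesis by (rule distinct_prime_dvd_mult_cancel[OF pr])
  qed
  then have "x \<in> J" using xr ind by (force simp: ghost_ideal_def ind_def)
  moreover have "(\<lambda>i. e * (if i = Suc n then int q else 0)) \<in> J" by (rule is_ideal_cmult[OF J qJ])
  moreover have "b = (\<lambda>i. x i + e * (if i = Suc n then int q else 0))"
    unfolding x_def using e by (auto simp: mult.commute)
  ultimately show ?thesis using is_ideal_add[OF J] by metis
qed

text \<open>Below the top, the ghost components of \<open>q - jnd(q) \<in> R\<^sub>n\<^sub>+\<^sub>1\<close> equal \<open>q - q\<^sup>p\<close>; they are \<open>p\<close> times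
  those of an element of \<open>R\<^sub>n\<close>, which lies in \<open>Z\<^sub>n(n)\<close> because \<open>p\<close> is invertible modulo \<open>q\<close>.\<close>

lemma top_ghost_ideal_subset:
  assumes pr: "prime p" "prime q" "q \<noteq> p" and J: "is_ideal p (Suc n) J"
    and ind: "ind (Suc n) n ` ghost_ideal p q n n \<subseteq> J"
    and jnd: "jnd p (Suc n) n ` ghost_ideal p q n n \<subseteq> J"
  shows "ghost_ideal p q (Suc n) (Suc n) \<subseteq> J"
proof -
  define e where "e = (\<lambda>i. if i = n then int q else 0)"
  have "e \<in> ghost_ideal p q n n" unfolding ghost_ideal_def e_def Rcar_def by (simp add: ghost_basis)
  then have yJ: "jnd p (Suc n) n e \<in> J" using jnd by auto
  define x where "x = (\<lambda>i. (if i = Suc n then int q else 0) - jnd p (Suc n) n e i)"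
  have xr: "x \<in> Rcar n"
    using jnd_Rcar[of n "Suc n" p e] unfolding x_def Rcar_def by (auto simp: e_def)
  have "int q dvd ghost p n t x" if t: "t \<le> n" for t
  proof -
    have "ghost p (Suc n) t x = int q - int q ^ p"
      unfolding x_def ghost_diff using t by (simp add: ghost_basis ghost_jnd[OF pr(1)] e_def)
    moreover have "int q dvd int q - int q ^ p"
      using prime_gt_0_nat[OF pr(1)] by (simp add: dvd_power)
    ultimately have "int q dvd int p * ghost p n t x"
      using ghost_ind[OF xr t] by (simp add: ind_def)
    then show ?thesis by (rule distinct_prime_dvd_mult_cancel[OF pr])
  qed
  then have "x \<in> J" using xr ind by (force simp: ghost_ideal_def ind_def)
  then have "(\<lambda>i. x i + jnd p (Suc n) n e i) \<in> J" using yJ by (rule is_ideal_add[OF J])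
  then have qJ: "(\<lambda>i. if i = Suc n then int q else 0) \<in> J" unfolding x_def by simp
  show ?thesis
  proof
    fix b assume "b \<in> ghost_ideal p q (Suc n) (Suc n)"
    then show "b \<in> J"
      using ghost_ideal_top_dvd_mem[OF pr J ind qJ] ghost_ideal_top_iff by blast
  qed
qed

lemma ghost_ideal_subset_of_top_coprime:
  assumes pr: "prime p" "prime q" "q \<noteq> p" and J: "is_ideal p (Suc n) J"
    and ind: "ind (Suc n) n ` ghost_ideal p q K n \<subseteq> J"
    and top: "ghost_ideal p q (Suc n) (Suc n) \<subseteq> J"
    and y: "y \<in> J" "y \<in> ghost_ideal p q K (Suc n)" "\<not> int q dvd y (Suc n)"
  shows "ghost_ideal p q K (Suc n) \<subseteq> J"
proof
  fix b assume b: "b \<in> ghost_ideal p q K (Suc n)"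
  have qJ: "(\<lambda>i. if i = Suc n then int q else 0) \<in> J"
    using top by (auto simp: ghost_ideal_def Rcar_def ghost_basis)
  have "coprime (int q) (y (Suc n))" using y(3) pr(2) by (simp add: prime_imp_coprime)
  then obtain u v where uv: "u * y (Suc n) + v * int q = 1"
    by (metis bezout_int coprime_iff_gcd_eq_1 gcd.commute)
  define z where "z = (\<lambda>i. b i - b (Suc n) * u * y i)"
  have "z (Suc n) = b (Suc n) * (1 - u * y (Suc n))"
    unfolding z_def by (simp add: algebra_simps)
  also have "1 - u * y (Suc n) = int q * v" using uv by (simp add: algebra_simps)
  finally have "int q dvd z (Suc n)" by simp
  moreover have "z \<in> ghost_ideal p q K (Suc n)"
    using b y(2) unfolding ghost_ideal_def z_def Rcar_def by (auto simp: ghost_diff ghost_cmult)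
  ultimately have "z \<in> J" using ghost_ideal_top_dvd_mem[OF pr J ind qJ] by simp
  moreover have "(\<lambda>i. b (Suc n) * u * y i) \<in> J" by (rule is_ideal_cmult[OF J y(1)])
  ultimately have "(\<lambda>i. z i + b (Suc n) * u * y i) \<in> J" by (rule is_ideal_add[OF J])
  then show "b \<in> J" unfolding z_def by simp
qed

lemma is_omega_idealD:
  assumes "is_omega_ideal p l I" "Suc n \<le> l"
  shows "is_ideal p (Suc n) (I ! Suc n)"
    and "ind (Suc n) n ` (I ! n) \<subseteq> I ! Suc n"
    and "jnd p (Suc n) n ` (I ! n) \<subseteq> I ! Suc n"
    and "res p (Suc n) n ` (I ! Suc n) \<subseteq> I ! n"
proof -
  have "\<forall>k. 1 \<le> k \<and> k \<le> l \<longrightarrow> ind k (k - 1) ` (I ! (k - 1)) \<subseteq> I ! k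
      \<and> res p k (k - 1) ` (I ! k) \<subseteq> I ! (k - 1) \<and> jnd p k (k - 1) ` (I ! (k - 1)) \<subseteq> I ! k"
    using assms(1) by (simp add: is_omega_ideal_def)
  from spec[OF this, of "Suc n"] assms(2)
  show "ind (Suc n) n ` (I ! n) \<subseteq> I ! Suc n" "res p (Suc n) n ` (I ! Suc n) \<subseteq> I ! n"
    "jnd p (Suc n) n ` (I ! n) \<subseteq> I ! Suc n" by simp_all
  show "is_ideal p (Suc n) (I ! Suc n)" using assms by (simp add: is_omega_ideal_def)
qed

lemma ideal_above_ghost_ideal_cases:
  assumes pr: "prime p" "prime q" "q \<noteq> p" and K: "K \<le> n" and J: "is_ideal p (Suc n) J"
    and ind: "ind (Suc n) n ` ghost_ideal p q K n \<subseteq> J"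
    and jnd: "jnd p (Suc n) n ` ghost_ideal p q K n \<subseteq> J"
    and res: "res p (Suc n) n ` J \<subseteq> ghost_ideal p q K n"
  shows "J = ghost_ideal p q K (Suc n) \<or> K = n \<and> J = ghost_ideal p q (Suc n) (Suc n)"
proof -
  have top: "ghost_ideal p q (Suc n) (Suc n) \<subseteq> J"
    using top_ghost_ideal_subset[OF pr J] ind jnd ghost_ideal_antimono[OF K, of p q n] by blast
  have upper: "J \<subseteq> ghost_ideal p q K (Suc n)"
  proof
    fix a assume "a \<in> J"
    then have "a \<in> Lset p (Suc n) (ghost_ideal p q K n)"
      using res is_ideal_Rcar[OF J] by (auto simp: Lset_def)
    then show "a \<in> ghost_ideal p q K (Suc n)" using Lset_ghost_ideal[OF K] by simp
  qed
  consider (below) "K < n" | (top_eq) "K = n" "J = ghost_ideal p q (Suc n) (Suc n)"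
    | (top_neq) "K = n" "J \<noteq> ghost_ideal p q (Suc n) (Suc n)"
    using K by linarith
  then show ?thesis
  proof cases
    case below
    then obtain n' where n: "n = Suc n'" "K \<le> n'" by (cases n) auto
    define w where "w = (\<lambda>i. if i = Suc n' then int p else if i = n' then -1 else (0::int))"
    have "w \<in> ghost_ideal p q K n"
      using ghost_ideal_top_witness[of n' p q] ghost_ideal_antimono[OF n(2)] n(1) w_def by blast
    then have "jnd p (Suc n) n w \<in> J" "jnd p (Suc n) n w \<in> ghost_ideal p q K (Suc n)"
      using jnd jnd_ghost_ideal[OF pr(1), of n q K] by auto
    moreover have "\<not> int q dvd jnd p (Suc n) n w (Suc n)"
      using distinct_primes_not_dvd[OF pr] n(1) by (simp add: w_def)
    ultimately have "ghost_ideal p q K (Suc n) \<subseteq> J"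
      using ghost_ideal_subset_of_top_coprime[OF pr J ind top] by blast
    then show ?thesis using upper by blast
  next
    case top_eq
    then show ?thesis by blast
  next
    case top_neq
    then obtain a where a: "a \<in> J" "a \<notin> ghost_ideal p q (Suc n) (Suc n)" using top by blast
    moreover have "a \<in> ghost_ideal p q n (Suc n)" using a upper top_neq by auto
    ultimately have "\<not> int q dvd a (Suc n)" using ghost_ideal_top_iff by blast
    then have "ghost_ideal p q K (Suc n) \<subseteq> J"
      using ghost_ideal_subset_of_top_coprime[OF pr J ind top a(1)] \<open>a \<in> ghost_ideal p q n (Suc n)\<close>
        top_neq by blast
    then show ?thesis using upper by blast
  qed
qed

lemma omega_ideal_over_q_is_ghost_chain:
  assumes pr: "prime p" "prime q" "q \<noteq> p"
    and I: "is_omega_ideal p l I" and I0: "I ! 0 = {m \<in> Rcar 0. int q dvd m 0}"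
  shows "\<exists>K \<le> l. I = ghost_chain p q K l"
proof -
  have "\<exists>K \<le> k. \<forall>j \<le> k. I ! j = ghost_ideal p q K j" if "k \<le> l" for k
    using that
  proof (induction k)
    case 0
    then show ?case using I0 by (auto simp: ghost_ideal_0)
  next
    case (Suc n)
    then obtain K where K: "K \<le> n" and IK: "\<forall>j \<le> n. I ! j = ghost_ideal p q K j" by auto
    have "I ! n = ghost_ideal p q K n" using IK by simp
    note step = is_omega_idealD[OF I Suc.prems, unfolded this]
    consider "I ! Suc n = ghost_ideal p q K (Suc n)"
      | "K = n" "I ! Suc n = ghost_ideal p q (Suc n) (Suc n)"
      using ideal_above_ghost_ideal_cases[OF pr K step] by blast
    then show ?case
    proof cases
      case 1
      then show ?thesis using K IK by (metis le_Suc_eq)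
    next
      case 2
      have "I ! j = ghost_ideal p q (Suc n) j" if "j \<le> Suc n" for j
      proof (cases "j = Suc n")
        case False
        then have "j \<le> n" using that by simp
        then show ?thesis
          using IK 2(1) ghost_ideal_saturate[of j n] ghost_ideal_saturate[of j "Suc n"] by simp
      qed (use 2 in simp)
      then show ?thesis by blast
    qed
  qed
  then obtain K where "K \<le> l" "\<forall>j \<le> l. I ! j = ghost_ideal p q K j" by blast
  moreover have "length I = Suc l" using I by (simp add: is_omega_ideal_def)
  ultimately have "I = ghost_chain p q K l" by (intro nth_equalityI) auto
  then show ?thesis using \<open>K \<le> l\<close> by blast
qed

lemma omega_ideals_over_q:
  assumes "prime p" "prime q" "q \<noteq> p"
  shows "{I. is_omega_ideal p l I \<and> I ! 0 = {m \<in> Rcar 0. int q dvd m 0}} = {ghost_chain p q K l | K. K \<le> l}"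
proof (intro equalityI subsetI)
  fix I assume "I \<in> {I. is_omega_ideal p l I \<and> I ! 0 = {m \<in> Rcar 0. int q dvd m 0}}"
  then show "I \<in> {ghost_chain p q K l | K. K \<le> l}"
    using omega_ideal_over_q_is_ghost_chain[OF assms] by blast
qed (auto simp: is_omega_ideal_ghost_chain[OF assms(1)] ghost_ideal_0)

section \<open>The operators \<open>\<L>\<close> and \<open>\<S>\<close> on ghost chains\<close>

lemma Sset_ghost_ideal:
  assumes "prime p" "prime q" "q \<noteq> p"
  shows "Sset p (Suc n) (ghost_ideal p q n n) = ghost_ideal p q (Suc n) (Suc n)"
proof (rule antisym)
  show "Sset p (Suc n) (ghost_ideal p q n n) \<subseteq> ghost_ideal p q (Suc n) (Suc n)"
    unfolding Sset_def ideal_gen_def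
    using is_ideal_ghost_ideal ind_ghost_ideal[of n p q "Suc n"] jnd_ghost_ideal[OF assms(1), of n q "Suc n"]
    by (intro Inter_lower) (simp add: ghost_ideal_saturate[of n "Suc n"])
  show "ghost_ideal p q (Suc n) (Suc n) \<subseteq> Sset p (Suc n) (ghost_ideal p q n n)"
    unfolding Sset_def ideal_gen_def
    by (rule Inter_greatest) (auto intro: top_ghost_ideal_subset[OF assms, THEN subsetD])
qed

lemma Sop_power_qideal:
  assumes "prime p" "prime q" "q \<noteq> p"
  shows "(Sop p ^^ k) (qideal q) = ghost_chain p q k k"
proof (induction k)
  case 0
  then show ?case by (simp add: qideal_def ghost_chain_def ghost_ideal_0)
next
  case (Suc k)
  have "(Sop p ^^ Suc k) (qideal q) = ghost_chain p q k k @ [Sset p (Suc k) (ghost_ideal p q k k)]"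
    by (simp only: funpow.simps(2) o_apply Suc.IH) (simp add: Sop_def)
  also have "\<dots> = ghost_chain p q (Suc k) k @ [ghost_ideal p q (Suc k) (Suc k)]"
    using ghost_chain_saturate[of k "Suc k"] Sset_ghost_ideal[OF assms] by simp
  finally show ?case by (simp add: ghost_chain_Suc)
qed

lemma Lop_power_ghost_chain:
  "(Lop p ^^ m) (ghost_chain p q K K) = ghost_chain p q K (K + m)"
proof (induction m)
  case (Suc m)
  have "(Lop p ^^ Suc m) (ghost_chain p q K K)
      = ghost_chain p q K (K + m) @ [Lset p (Suc (K + m)) (ghost_ideal p q K (K + m))]"
    by (simp only: funpow.simps(2) o_apply Suc.IH) (simp add: Lop_def)
  then show ?case by (simp add: Lset_ghost_ideal ghost_chain_Suc)
qed simp

lemma Lop_Sop_qideal: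
  assumes "prime p" "prime q" "q \<noteq> p" "K \<le> l"
  shows "(Lop p ^^ (l - K)) ((Sop p ^^ K) (qideal q)) = ghost_chain p q K l"
  using assms by (simp add: Sop_power_qideal Lop_power_ghost_chain)

theorem proposition6:
  fixes p q r l :: nat
  assumes "prime p" and "prime q" and "q \<noteq> p" and "l \<le> r"
  shows "{I. is_omega_ideal p l I \<and> I ! 0 = {m \<in> Rcar 0. int q dvd m 0}}
           = {(Lop p ^^ (l - k)) ((Sop p ^^ k) (qideal q)) | k. k \<le> l}
       \<and> (\<forall>k<l. omega_less ((Lop p ^^ (l - (k + 1))) ((Sop p ^^ (k + 1)) (qideal q)))
                            ((Lop p ^^ (l - k)) ((Sop p ^^ k) (qideal q))))
       \<and> (\<forall>k\<le>l. is_prime_omega_ideal p l ((Lop p ^^ (l - k)) ((Sop p ^^ k) (qideal q))))"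
proof -
  note pr = assms(1-3)
  define chain where "chain k = (Lop p ^^ (l - k)) ((Sop p ^^ k) (qideal q))" for k
  have fold: "(Lop p ^^ (l - k)) ((Sop p ^^ k) (qideal q)) = chain k" for k
    by (simp add: chain_def)
  have chain: "chain k = ghost_chain p q k l" if "k \<le> l" for k
    unfolding chain_def using Lop_Sop_qideal[OF pr that] .
  have "{I. is_omega_ideal p l I \<and> I ! 0 = {m \<in> Rcar 0. int q dvd m 0}} = {chain k | k. k \<le> l}"
    unfolding omega_ideals_over_q[OF pr] using chain by force
  moreover have "\<forall>k<l. omega_less (chain (k + 1)) (chain k)"
    using chain omega_less_ghost_chain_Suc[OF pr] by simp
  moreover have "\<forall>k\<le>l. is_prime_omega_ideal p l (chain k)"
    using chain is_prime_omega_ideal_ghost_chain[OF pr(1,2)] by simp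
  ultimately show ?thesis unfolding fold by blast
qed

end
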